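(* Let $(\mathbf M,\tau)$ be a state BL-algebra. Then: (1) If $\tau$ is faithful (i.e. $\mathrm{Ker}(\tau)=\{1\}$), then $(\mathbf M,\tau)$ is a subdirectly irreducible state BL-algebra if and only if $\tau(\mathbf M)$ is a subdirectly irreducible BL-algebra. Suppose now that $(\mathbf M,\tau)$ is subdirectly irreducible. Then: (2) $\mathrm{Ker}(\tau)$ is either the trivial hoop $\{1\}$ or a subdirectly irreducible hoop; (3) $\mathrm{Ker}(\tau)$ and $\tau(M)$ have the disjunction property, i.e. for all $x\in \mathrm{Ker}(\tau)$ and $y\in\tau(M)$, if $x\vee y=1$ then $x=1$ or $y=1$.
   Context: A BL-algebra is an algebra $\mathbf M=(M;\wedge,\vee,\odot,\to,0,1)$ of type $\langle 2,2,2,2,0,0\rangle$ such that $(M;\wedge,\vee,0,1)$ is a bounded lattice, $(M;\odot,1)$ is a commutative monoid, and for all $a,b,c$: $c\le a\to b$ iff $a\odot c\le b$; $a\wedge b=a\odot(a\to b)$; $(a\to b)\vee(b\to a)=1$. A filter of $\mathbf M$ is a nonempty $F\subseteq M$ closed under $\odot$ and upward closed. A state-operator on $\mathbf M$ is a map $\tau:M\to M$ such that for all $x,y$: $\tau(0)=0$; $\tau(x\to y)=\tau(x)\to\tau(x\wedge y)$; $\tau(x\odot y)=\tau(x)\odot\tau(x\to(x\odot y))$; $\tau(\tau(x)\odot\tau(y))=\tau(x)\odot\tau(y)$; $\tau(\tau(x)\to\tau(y))=\tau(x)\to\tau(y)$. The pair $(\mathbf M,\tau)$ is a state BL-algebra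 (an algebra with the extra unary operation $\tau$). A $\tau$-filter is a filter $F$ with $\tau(F)\subseteq F$; congruences of $(\mathbf M,\tau)$ correspond bijectively to $\tau$-filters (via $x\sim_F y$ iff $x\to y,y\to x\in F$), so $(\mathbf M,\tau)$ is subdirectly irreducible iff it has a least $\tau$-filter different from $\{1\}$. $\mathrm{Ker}(\tau)=\{a\in M:\tau(a)=1\}$; $\tau$ is faithful if $\mathrm{Ker}(\tau)=\{1\}$. The image $\tau(M)$ is a subalgebra of $\mathbf M$ (a BL-algebra, denoted $\tau(\mathbf M)$), and $\mathrm{Ker}(\tau)$ is closed under $\odot,\to$ and contains $1$, hence is a hoop; a filter of this hoop is a nonempty subset closed under $\odot$ and upward closed in $\mathrm{Ker}(\tau)$, and the hoop is subdirectly irreducible if it has a least filter different from $\{1\}$. *)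

theory Defs
  imports Main
begin

record 'a bl_alg =
  bl_carrier :: "'a set"
  bl_meet :: "'a \<Rightarrow> 'a \<Rightarrow> 'a"
  bl_join :: "'a \<Rightarrow> 'a \<Rightarrow> 'a"
  bl_prod :: "'a \<Rightarrow> 'a \<Rightarrow> 'a"
  bl_imp  :: "'a \<Rightarrow> 'a \<Rightarrow> 'a"
  bl_zero :: 'a
  bl_one  :: 'a

definition bl_le :: "('a, 'b) bl_alg_scheme \<Rightarrow> 'a \<Rightarrow> 'a \<Rightarrow> bool" where
  "bl_le A x y \<longleftrightarrow> bl_meet A x y = x"

definition bl_algebra :: "('a, 'b) bl_alg_scheme \<Rightarrow> bool" where
  "bl_algebra A \<longleftrightarrow>
     (let M = bl_carrier A; mt = bl_meet A; jn = bl_join A; pr = bl_prod A;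
          im = bl_imp A; z = bl_zero A; u = bl_one A in
      z \<in> M \<and> u \<in> M \<and>
      (\<forall>x\<in>M. \<forall>y\<in>M. mt x y \<in> M \<and> jn x y \<in> M \<and> pr x y \<in> M \<and> im x y \<in> M) \<and>
      \<comment> \<open>bounded lattice\<close>
      (\<forall>x\<in>M. \<forall>y\<in>M. mt x y = mt y x \<and> jn x y = jn y x) \<and>
      (\<forall>x\<in>M. \<forall>y\<in>M. \<forall>w\<in>M. mt (mt x y) w = mt x (mt y w) \<and> jn (jn x y) w = jn x (jn y w)) \<and>
      (\<forall>x\<in>M. \<forall>y\<in>M. mt x (jn x y) = x \<and> jn x (mt x y) = x) \<and>
      (\<forall>x\<in>M. mt z x = z \<and> mt x u = x) \<and>
      \<comment> \<open>commutative monoid\<close>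
      (\<forall>x\<in>M. \<forall>y\<in>M. \<forall>w\<in>M. pr (pr x y) w = pr x (pr y w)) \<and>
      (\<forall>x\<in>M. \<forall>y\<in>M. pr x y = pr y x) \<and>
      (\<forall>x\<in>M. pr x u = x) \<and>
      \<comment> \<open>residuation, divisibility, prelinearity\<close>
      (\<forall>a\<in>M. \<forall>b\<in>M. \<forall>c\<in>M. bl_le A c (im a b) \<longleftrightarrow> bl_le A (pr a c) b) \<and>
      (\<forall>a\<in>M. \<forall>b\<in>M. mt a b = pr a (im a b)) \<and>
      (\<forall>a\<in>M. \<forall>b\<in>M. jn (im a b) (im b a) = u))"

definition state_operator :: "('a, 'b) bl_alg_scheme \<Rightarrow> ('a \<Rightarrow> 'a) \<Rightarrow> bool" where
  "state_operator A \<tau> \<longleftrightarrow>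
     (let M = bl_carrier A; mt = bl_meet A; pr = bl_prod A; im = bl_imp A in
      \<tau> ` M \<subseteq> M \<and>
      \<tau> (bl_zero A) = bl_zero A \<and>
      (\<forall>x\<in>M. \<forall>y\<in>M. \<tau> (im x y) = im (\<tau> x) (\<tau> (mt x y))) \<and>
      (\<forall>x\<in>M. \<forall>y\<in>M. \<tau> (pr x y) = pr (\<tau> x) (\<tau> (im x (pr x y)))) \<and>
      (\<forall>x\<in>M. \<forall>y\<in>M. \<tau> (pr (\<tau> x) (\<tau> y)) = pr (\<tau> x) (\<tau> y)) \<and>
      (\<forall>x\<in>M. \<forall>y\<in>M. \<tau> (im (\<tau> x) (\<tau> y)) = im (\<tau> x) (\<tau> y)))"

definition state_bl_algebra :: "('a, 'b) bl_alg_scheme \<Rightarrow> ('a \<Rightarrow> 'a) \<Rightarrow> bool" where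
  "state_bl_algebra A \<tau> \<longleftrightarrow> bl_algebra A \<and> state_operator A \<tau>"

definition filter_in :: "('a, 'b) bl_alg_scheme \<Rightarrow> 'a set \<Rightarrow> 'a set \<Rightarrow> bool" where
  "filter_in A S F \<longleftrightarrow> F \<subseteq> S \<and> F \<noteq> {} \<and>
     (\<forall>x\<in>F. \<forall>y\<in>F. bl_prod A x y \<in> F) \<and>
     (\<forall>x\<in>F. \<forall>y\<in>S. bl_le A x y \<longrightarrow> y \<in> F)"

definition bl_filter :: "('a, 'b) bl_alg_scheme \<Rightarrow> 'a set \<Rightarrow> bool" where
  "bl_filter A F \<longleftrightarrow> filter_in A (bl_carrier A) F"

definition tau_filter :: "('a, 'b) bl_alg_scheme \<Rightarrow> ('a \<Rightarrow> 'a) \<Rightarrow> 'a set \<Rightarrow> bool" where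
  "tau_filter A \<tau> F \<longleftrightarrow> bl_filter A F \<and> \<tau> ` F \<subseteq> F"

definition has_least_nontrivial :: "('a set \<Rightarrow> bool) \<Rightarrow> 'a \<Rightarrow> bool" where
  "has_least_nontrivial P u \<longleftrightarrow>
     (\<exists>F. P F \<and> F \<noteq> {u} \<and> (\<forall>G. P G \<and> G \<noteq> {u} \<longrightarrow> F \<subseteq> G))"

definition subdir_irr_state :: "('a, 'b) bl_alg_scheme \<Rightarrow> ('a \<Rightarrow> 'a) \<Rightarrow> bool" where
  "subdir_irr_state A \<tau> \<longleftrightarrow> has_least_nontrivial (tau_filter A \<tau>) (bl_one A)"

definition subdir_irr_bl :: "('a, 'b) bl_alg_scheme \<Rightarrow> bool" where
  "subdir_irr_bl A \<longleftrightarrow> has_least_nontrivial (bl_filter A) (bl_one A)"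

definition state_kernel :: "('a, 'b) bl_alg_scheme \<Rightarrow> ('a \<Rightarrow> 'a) \<Rightarrow> 'a set" where
  "state_kernel A \<tau> = {a \<in> bl_carrier A. \<tau> a = bl_one A}"

definition image_alg :: "('a, 'b) bl_alg_scheme \<Rightarrow> ('a \<Rightarrow> 'a) \<Rightarrow> ('a, 'b) bl_alg_scheme" where
  "image_alg A \<tau> = A\<lparr>bl_carrier := \<tau> ` bl_carrier A\<rparr>"

definition subdir_irr_hoop :: "('a, 'b) bl_alg_scheme \<Rightarrow> 'a set \<Rightarrow> bool" where
  "subdir_irr_hoop A K \<longleftrightarrow> has_least_nontrivial (filter_in A K) (bl_one A)"

end

theory Submission imports Defs begin

text \<open>
  Restriction \<open>F \<mapsto> F \<inter> \<tau>(M)\<close> and upward closure \<open>G \<mapsto> \<up>G\<close> are monotone maps between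
  \<open>\<tau>\<close>-filters of \<open>M\<close> and filters of \<open>\<tau>(M)\<close> whose composites are contractive. Upward
  closure preserves nontriviality, and so does restriction when \<open>\<tau>\<close> is faithful (a nontrivial
  \<open>\<tau>\<close>-filter contains some \<open>\<tau> x \<noteq> 1\<close>); hence both maps carry least nontrivial elements to
  least nontrivial elements.
  Since \<open>\<tau>\<close> is constantly \<open>1\<close> on \<open>Ker(\<tau>)\<close>, the filters of the hoop \<open>Ker(\<tau>)\<close> are exactly the
  \<open>\<tau>\<close>-filters contained in it, and the least nontrivial \<open>\<tau>\<close>-filter lies in \<open>Ker(\<tau>)\<close> as soon as
  \<open>Ker(\<tau>) \<noteq> {1}\<close>.
  Finally, for \<open>x \<in> Ker(\<tau>)\<close> and \<open>y \<in> \<tau>(M)\<close> the filters generated by \<open>x\<close> and by \<open>y\<close> are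
  \<open>\<tau>\<close>-filters; if both are nontrivial they contain the least one, which then holds an
  element \<open>f \<noteq> 1\<close> above some \<open>x\<^sup>n\<close> and some \<open>y\<^sup>m\<close>. But \<open>x \<or> y = 1\<close> implies
  \<open>x\<^sup>n \<or> y\<^sup>m = 1\<close> in a BL-algebra, forcing \<open>f = 1\<close>.
\<close>

lemma has_least_nontrivial_transfer:
  assumes least: "has_least_nontrivial P u"
    and r: "\<And>F. P F \<Longrightarrow> Q (r F)" "\<And>F. P F \<Longrightarrow> F \<noteq> {u} \<Longrightarrow> r F \<noteq> {u}" "mono r"
    and e: "\<And>G. Q G \<Longrightarrow> P (e G)" "\<And>G. Q G \<Longrightarrow> G \<noteq> {u} \<Longrightarrow> e G \<noteq> {u}"
    and r_e: "\<And>G. Q G \<Longrightarrow> r (e G) \<subseteq> G"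
  shows "has_least_nontrivial Q u"
proof -
  obtain F where "P F \<and> F \<noteq> {u} \<and> (\<forall>G. P G \<and> G \<noteq> {u} \<longrightarrow> F \<subseteq> G)"
    using least unfolding has_least_nontrivial_def by (rule exE)
  then have F: "P F" "F \<noteq> {u}" and F_least: "\<And>G. P G \<Longrightarrow> G \<noteq> {u} \<Longrightarrow> F \<subseteq> G"
    by simp_all
  have "r F \<subseteq> G" if "Q G" "G \<noteq> {u}" for G
  proof -
    have "F \<subseteq> e G"
      using F_least e that by simp
    then have "r F \<subseteq> r (e G)"
      by (rule monoD[OF \<open>mono r\<close>])
    also have "\<dots> \<subseteq> G"
      using r_e that by simp
    finally show ?thesis .
  qed
  with F r(1,2) show ?thesis
    unfolding has_least_nontrivial_def by (intro exI[of _ "r F"]) simp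
qed

locale BL =
  fixes A :: "('a, 'b) bl_alg_scheme"
  assumes bl_algebra: "bl_algebra A"
begin

abbreviation M where "M \<equiv> bl_carrier A"
abbreviation meet where "meet \<equiv> bl_meet A"
abbreviation join where "join \<equiv> bl_join A"
abbreviation bprod (infixl "\<odot>" 70) where "x \<odot> y \<equiv> bl_prod A x y"
abbreviation bimp (infixr "\<rightarrow>" 65) where "x \<rightarrow> y \<equiv> bl_imp A x y"
abbreviation bzero ("\<zero>") where "\<zero> \<equiv> bl_zero A"
abbreviation bone ("\<one>") where "\<one> \<equiv> bl_one A"
abbreviation ble (infix "\<preceq>" 50) where "x \<preceq> y \<equiv> bl_le A x y"

lemma zero_closed [simp]: "\<zero> \<in> M"
  and one_closed [simp]: "\<one> \<in> M"
  using bl_algebra unfolding bl_algebra_def Let_def by auto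

lemma
  assumes "x \<in> M" "y \<in> M"
  shows meet_closed [simp]: "meet x y \<in> M" and join_closed [simp]: "join x y \<in> M"
    and prod_closed [simp]: "x \<odot> y \<in> M" and imp_closed [simp]: "x \<rightarrow> y \<in> M"
  using bl_algebra assms unfolding bl_algebra_def Let_def by auto

lemma
  assumes "x \<in> M" "y \<in> M" "w \<in> M"
  shows meet_commute: "meet x y = meet y x" and join_commute: "join x y = join y x"
    and meet_assoc: "meet (meet x y) w = meet x (meet y w)"
    and join_assoc: "join (join x y) w = join x (join y w)"
    and meet_join_absorb: "meet x (join x y) = x" and join_meet_absorb: "join x (meet x y) = x"
    and meet_one: "meet x \<one> = x"
    and prod_assoc: "(x \<odot> y) \<odot> w = x \<odot> (y \<odot> w)" and prod_commute: "x \<odot> y = y \<odot> x"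
    and prod_one: "x \<odot> \<one> = x"
    and residuation: "w \<preceq> x \<rightarrow> y \<longleftrightarrow> x \<odot> w \<preceq> y"
    and divisibility: "meet x y = x \<odot> (x \<rightarrow> y)"
  using bl_algebra assms unfolding bl_algebra_def Let_def by auto

lemma le_iff_meet: "x \<preceq> y \<longleftrightarrow> meet x y = x"
  by (simp add: bl_le_def)

lemma le_refl: assumes "x \<in> M" shows "x \<preceq> x"
proof -
  have "meet x x = meet x (join x (meet x x))"
    using assms by (simp add: join_meet_absorb)
  also have "\<dots> = x"
    using assms by (simp add: meet_join_absorb)
  finally show ?thesis by (simp add: le_iff_meet)
qed

lemma le_antisym: "x \<in> M \<Longrightarrow> y \<in> M \<Longrightarrow> x \<preceq> y \<Longrightarrow> y \<preceq> x \<Longrightarrow> x = y"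
  unfolding le_iff_meet by (metis meet_commute)

lemma le_trans: assumes "x \<in> M" "y \<in> M" "w \<in> M" "x \<preceq> y" "y \<preceq> w" shows "x \<preceq> w"
  using assms meet_assoc[of x y w] by (simp add: le_iff_meet)

lemma le_iff_join: assumes "x \<in> M" "y \<in> M" shows "x \<preceq> y \<longleftrightarrow> join x y = y"
  using assms join_meet_absorb[of y x] meet_join_absorb[of x y]
  by (auto simp: le_iff_meet meet_commute join_commute)

lemma join_upper1: "x \<in> M \<Longrightarrow> y \<in> M \<Longrightarrow> x \<preceq> join x y"
  by (simp add: le_iff_meet meet_join_absorb)

lemma join_upper2: "x \<in> M \<Longrightarrow> y \<in> M \<Longrightarrow> y \<preceq> join x y"
  using join_upper1[of y x] by (simp add: join_commute)

lemma join_least: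
  assumes "x \<in> M" "y \<in> M" "w \<in> M" "x \<preceq> w" "y \<preceq> w" shows "join x y \<preceq> w"
  using assms join_assoc[of x y w] by (simp add: le_iff_join)

lemma le_one: "x \<in> M \<Longrightarrow> x \<preceq> \<one>"
  by (simp add: le_iff_meet meet_one)

lemma one_le_iff: "x \<in> M \<Longrightarrow> \<one> \<preceq> x \<longleftrightarrow> x = \<one>"
  using le_antisym le_one le_refl by fastforce

lemma prod_mono_left:
  assumes "a \<in> M" "b \<in> M" "c \<in> M" "a \<preceq> b" shows "a \<odot> c \<preceq> b \<odot> c"
proof -
  have "b \<preceq> c \<rightarrow> b \<odot> c"
    using assms by (simp add: residuation prod_commute le_refl)
  then have "a \<preceq> c \<rightarrow> b \<odot> c"
    using assms le_trans[of a b] by simp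
  then show ?thesis
    using assms by (simp add: residuation prod_commute)
qed

lemma prod_mono_right:
  "a \<in> M \<Longrightarrow> b \<in> M \<Longrightarrow> c \<in> M \<Longrightarrow> a \<preceq> b \<Longrightarrow> c \<odot> a \<preceq> c \<odot> b"
  using prod_mono_left by (simp add: prod_commute)

lemma imp_self: "x \<in> M \<Longrightarrow> x \<rightarrow> x = \<one>"
  using residuation[of x x \<one>] by (simp add: prod_one le_refl one_le_iff)

lemma prod_le_left: "x \<in> M \<Longrightarrow> y \<in> M \<Longrightarrow> x \<odot> y \<preceq> x"
  using residuation[of x x y] by (simp add: imp_self le_one)

lemma prod_le_right: "x \<in> M \<Longrightarrow> y \<in> M \<Longrightarrow> x \<odot> y \<preceq> y"
  using prod_le_left[of y x] by (simp add: prod_commute)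

lemma prod_join_distrib:
  assumes "x \<in> M" "y \<in> M" "w \<in> M"
  shows "x \<odot> join y w = join (x \<odot> y) (x \<odot> w)"
proof (rule le_antisym)
  have "join y w \<preceq> x \<rightarrow> join (x \<odot> y) (x \<odot> w)"
    using assms by (intro join_least) (simp_all add: residuation join_upper1 join_upper2)
  then show "x \<odot> join y w \<preceq> join (x \<odot> y) (x \<odot> w)"
    using assms by (simp add: residuation)
  show "join (x \<odot> y) (x \<odot> w) \<preceq> x \<odot> join y w"
    using assms by (simp add: join_least prod_mono_right join_upper1 join_upper2)
qed (use assms in simp_all)

lemma join_prod_eq_one:
  assumes "a \<in> M" "b \<in> M" "c \<in> M" "join a b = \<one>" "join a c = \<one>"
  shows "join a (b \<odot> c) = \<one>"
proof -
  let ?j = "join a (b \<odot> c)"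
  have "\<one> = join a b \<odot> join a c"
    using assms by (simp add: prod_one)
  also have "\<dots> = join (join a b \<odot> a) (join (c \<odot> a) (b \<odot> c))"
    using assms(1-3) by (simp add: prod_join_distrib prod_commute[of "join a b"] prod_commute[of c b])
  finally have one_eq: "\<one> = \<dots>" .
  have a_le: "a \<preceq> ?j" and bc_le: "b \<odot> c \<preceq> ?j"
    using assms by (simp_all add: join_upper1 join_upper2)
  have "join a b \<odot> a \<preceq> ?j" "c \<odot> a \<preceq> ?j"
    using assms a_le le_trans[OF _ _ _ prod_le_right[of "join a b" a]]
      le_trans[OF _ _ _ prod_le_right[of c a]] by simp_all
  then have "\<one> \<preceq> ?j"
    unfolding one_eq using assms bc_le by (simp add: join_least)
  then show ?thesis
    using assms by (simp add: one_le_iff)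
qed

primrec pow :: "'a \<Rightarrow> nat \<Rightarrow> 'a" where
  "pow a 0 = \<one>"
| "pow a (Suc n) = a \<odot> pow a n"

lemma pow_closed [simp]: "a \<in> M \<Longrightarrow> pow a n \<in> M"
  by (induction n) simp_all

lemma pow_add: assumes "a \<in> M" shows "pow a (n + m) = pow a n \<odot> pow a m"
  using assms by (induction n) (simp_all add: prod_assoc prod_commute[of \<one>] prod_one)

lemma join_pow_eq_one:
  assumes "a \<in> M" "b \<in> M" "join a b = \<one>"
  shows "join (pow a n) (pow b m) = \<one>"
proof -
  have pow_right: "join x (pow y k) = \<one>" if "x \<in> M" "y \<in> M" "join x y = \<one>" for x y k
    using that by (induction k) (simp_all add: le_one le_iff_join[symmetric] join_prod_eq_one)
  have "join b (pow a n) = \<one>"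
    using assms pow_right[of b a] by (simp add: join_commute)
  then show ?thesis
    using assms pow_right[of "pow a n" b] by (simp add: join_commute)
qed

lemma one_mem_filter_in:
  assumes "filter_in A S F" "\<one> \<in> S" "S \<subseteq> M" shows "\<one> \<in> F"
  using assms le_one unfolding filter_in_def by blast

lemma filter_in_nontrivial:
  assumes "filter_in A S F" "\<one> \<in> S" "S \<subseteq> M" "F \<noteq> {\<one>}" shows "\<exists>x\<in>F. x \<noteq> \<one>"
  using one_mem_filter_in[OF assms(1-3)] assms(4) by blast

lemma filter_in_upward_closed_iff:
  assumes "S \<subseteq> M" and up: "\<And>x y. x \<in> S \<Longrightarrow> y \<in> M \<Longrightarrow> x \<preceq> y \<Longrightarrow> y \<in> S"
  shows "filter_in A S F \<longleftrightarrow> bl_filter A F \<and> F \<subseteq> S"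
  using assms unfolding bl_filter_def filter_in_def by blast

definition upset :: "'a set \<Rightarrow> 'a set" where
  "upset G = {x \<in> M. \<exists>g\<in>G. g \<preceq> x}"

lemma mono_upset: "mono upset"
  unfolding upset_def by (rule monoI) blast

lemma subset_upset: "G \<subseteq> M \<Longrightarrow> G \<subseteq> upset G"
  unfolding upset_def using le_refl by blast

lemma upset_subset_filter: "bl_filter A F \<Longrightarrow> G \<subseteq> F \<Longrightarrow> upset G \<subseteq> F"
  unfolding upset_def bl_filter_def filter_in_def by blast

lemma upset_Int: "filter_in A S G \<Longrightarrow> S \<subseteq> M \<Longrightarrow> upset G \<inter> S = G"
  using subset_upset[of G] unfolding upset_def filter_in_def by blast

lemma upset_nontrivial:
  assumes G: "filter_in A S G" and "S \<subseteq> M" and "G \<noteq> {\<one>}"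
  shows "upset G \<noteq> {\<one>}"
proof
  assume "upset G = {\<one>}"
  moreover have "G \<subseteq> M"
    using G \<open>S \<subseteq> M\<close> unfolding filter_in_def by blast
  ultimately have "G \<subseteq> {\<one>}"
    using subset_upset[of G] by simp
  moreover have "G \<noteq> {}"
    using G unfolding filter_in_def by simp
  ultimately show False
    using \<open>G \<noteq> {\<one>}\<close> by (simp add: subset_singleton_iff)
qed

lemma bl_filter_upset:
  assumes GM: "G \<subseteq> M" and "G \<noteq> {}" and G_prod: "\<And>g h. g \<in> G \<Longrightarrow> h \<in> G \<Longrightarrow> g \<odot> h \<in> G"
  shows "bl_filter A (upset G)"
  unfolding bl_filter_def filter_in_def
proof (intro conjI ballI impI)
  show "upset G \<subseteq> M" "upset G \<noteq> {}"
    using subset_upset[OF GM] \<open>G \<noteq> {}\<close> unfolding upset_def by auto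
next
  fix x y assume "x \<in> upset G" "y \<in> upset G"
  then obtain g h where gh: "g \<in> G" "h \<in> G" "g \<preceq> x" "h \<preceq> y" "x \<in> M" "y \<in> M"
    unfolding upset_def by blast
  have "g \<in> M" "h \<in> M"
    using gh GM by auto
  with gh have "g \<odot> h \<preceq> x \<odot> h" "x \<odot> h \<preceq> x \<odot> y"
    by (simp_all add: prod_mono_left prod_mono_right)
  with gh \<open>g \<in> M\<close> \<open>h \<in> M\<close> have "g \<odot> h \<preceq> x \<odot> y"
    using le_trans[of "g \<odot> h" "x \<odot> h" "x \<odot> y"] by simp
  with gh G_prod show "x \<odot> y \<in> upset G"
    unfolding upset_def by auto
next
  fix x y assume "x \<in> upset G" "y \<in> M" "x \<preceq> y"
  then show "y \<in> upset G"
    unfolding upset_def using GM le_trans by blast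
qed

definition principal_filter :: "'a \<Rightarrow> 'a set" where
  "principal_filter a = upset (range (pow a))"

lemma pow_mem_principal_filter: "a \<in> M \<Longrightarrow> pow a n \<in> principal_filter a"
proof -
  assume "a \<in> M"
  then have "range (pow a) \<subseteq> M"
    by auto
  then show ?thesis
    unfolding principal_filter_def using subset_upset by blast
qed

lemma mem_principal_filter: "a \<in> M \<Longrightarrow> a \<in> principal_filter a"
  using pow_mem_principal_filter[of a 1] by (simp add: prod_one)

lemma bl_filter_principal_filter: "a \<in> M \<Longrightarrow> bl_filter A (principal_filter a)"
  unfolding principal_filter_def
  by (rule bl_filter_upset) (auto simp: pow_add[symmetric])

end

locale state_BL = BL +
  fixes \<tau> :: "'a \<Rightarrow> 'a"
  assumes state_operator: "state_operator A \<tau>"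
begin

abbreviation Ker where "Ker \<equiv> state_kernel A \<tau>"
abbreviation Img where "Img \<equiv> \<tau> ` M"

lemma tau_closed [simp]: "x \<in> M \<Longrightarrow> \<tau> x \<in> M"
  and tau_zero: "\<tau> \<zero> = \<zero>"
  using state_operator unfolding state_operator_def Let_def by auto

lemma
  assumes "x \<in> M" "y \<in> M"
  shows tau_imp: "\<tau> (x \<rightarrow> y) = \<tau> x \<rightarrow> \<tau> (meet x y)"
    and tau_prod: "\<tau> (x \<odot> y) = \<tau> x \<odot> \<tau> (x \<rightarrow> x \<odot> y)"
    and tau_prod_tau: "\<tau> (\<tau> x \<odot> \<tau> y) = \<tau> x \<odot> \<tau> y"
  using state_operator assms unfolding state_operator_def Let_def by auto

lemma tau_one: "\<tau> \<one> = \<one>"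
  using tau_imp[of \<zero> \<zero>] le_refl[of \<zero>] by (simp add: tau_zero imp_self le_iff_meet)

lemma tau_mono: assumes "x \<in> M" "y \<in> M" "x \<preceq> y" shows "\<tau> x \<preceq> \<tau> y"
proof -
  have "x = y \<odot> (y \<rightarrow> x)"
    using assms by (simp add: le_iff_meet meet_commute divisibility[symmetric])
  then have "\<tau> x = \<tau> y \<odot> \<tau> (y \<rightarrow> x)"
    using assms tau_prod[of y "y \<rightarrow> x"] by simp
  then show ?thesis
    using assms by (simp add: prod_le_left)
qed

lemma tau_idem: "x \<in> M \<Longrightarrow> \<tau> (\<tau> x) = \<tau> x"
  using tau_prod_tau[of x \<one>] by (simp add: tau_one prod_one)

lemma tau_pow_fixed: assumes "y \<in> M" "\<tau> y = y" shows "\<tau> (pow y n) = pow y n"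
proof (induction n)
  case (Suc n)
  then show ?case
    using assms tau_prod_tau[of y "pow y n"] by simp
qed (simp add: tau_one)

lemma mem_Ker_iff: "x \<in> Ker \<longleftrightarrow> x \<in> M \<and> \<tau> x = \<one>"
  by (simp add: state_kernel_def)

lemma one_in_Ker: "\<one> \<in> Ker"
  by (simp add: mem_Ker_iff tau_one)

lemma Ker_upward_closed: assumes "x \<in> Ker" "y \<in> M" "x \<preceq> y" shows "y \<in> Ker"
  using assms tau_mono[of x y] by (simp add: mem_Ker_iff one_le_iff)

lemma Ker_prod_closed: assumes "a \<in> Ker" "b \<in> Ker" shows "a \<odot> b \<in> Ker"
proof -
  have ab: "a \<in> M" "b \<in> M" "\<tau> a = \<one>" "\<tau> b = \<one>"
    using assms by (auto simp: mem_Ker_iff)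
  have "a \<rightarrow> a \<odot> b \<in> Ker"
    using ab assms Ker_upward_closed[of b] by (simp add: residuation le_refl)
  then show ?thesis
    using ab tau_prod[of a b] by (simp add: mem_Ker_iff prod_commute[of \<one>] prod_one)
qed

lemma pow_Ker: "x \<in> Ker \<Longrightarrow> pow x n \<in> Ker"
  by (induction n) (simp_all add: one_in_Ker Ker_prod_closed)

lemma tau_filter_Ker: "tau_filter A \<tau> Ker"
  unfolding tau_filter_def bl_filter_def filter_in_def
proof (intro conjI ballI impI)
  show "Ker \<subseteq> M" "\<tau> ` Ker \<subseteq> Ker"
    using one_in_Ker by (auto simp: mem_Ker_iff)
  show "Ker \<noteq> {}"
    using one_in_Ker by blast
qed (simp_all add: Ker_prod_closed Ker_upward_closed)

lemma filter_in_Ker_iff: "filter_in A Ker F \<longleftrightarrow> tau_filter A \<tau> F \<and> F \<subseteq> Ker"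
proof -
  have "Ker \<subseteq> M"
    by (auto simp: mem_Ker_iff)
  have stable: "\<tau> ` F \<subseteq> F" if F: "filter_in A Ker F"
  proof
    fix v assume "v \<in> \<tau> ` F"
    with F have "v = \<one>"
      unfolding filter_in_def by (auto simp: mem_Ker_iff)
    with one_mem_filter_in[OF F one_in_Ker \<open>Ker \<subseteq> M\<close>] show "v \<in> F"
      by simp
  qed
  have "filter_in A Ker F \<longleftrightarrow> bl_filter A F \<and> F \<subseteq> Ker"
    using \<open>Ker \<subseteq> M\<close> Ker_upward_closed by (rule filter_in_upward_closed_iff)
  with stable show ?thesis
    unfolding tau_filter_def by blast
qed

lemma tau_Img: "y \<in> Img \<Longrightarrow> \<tau> y = y"
  using tau_idem by auto

lemma Img_prod_closed: "x \<in> Img \<Longrightarrow> y \<in> Img \<Longrightarrow> x \<odot> y \<in> Img"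
  using tau_prod_tau by (metis imageE imageI prod_closed tau_closed)

lemma Img_subset: "Img \<subseteq> M"
  by auto

lemma one_Img: "\<one> \<in> Img"
  using tau_one one_closed by (metis imageI)

lemma tau_filter_principal_filter:
  assumes "a \<in> M" and pow_tau: "\<And>n. \<tau> (pow a n) \<in> principal_filter a"
  shows "tau_filter A \<tau> (principal_filter a)"
  unfolding tau_filter_def
proof (intro conjI subsetI)
  show P: "bl_filter A (principal_filter a)"
    using \<open>a \<in> M\<close> by (rule bl_filter_principal_filter)
  fix v assume "v \<in> \<tau> ` principal_filter a"
  then obtain w n where "v = \<tau> w" "w \<in> M" "pow a n \<preceq> w"
    unfolding principal_filter_def upset_def by blast
  with assms have "\<tau> (pow a n) \<preceq> v" "v \<in> M"
    by (simp_all add: tau_mono)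
  with P pow_tau[of n] show "v \<in> principal_filter a"
    unfolding bl_filter_def filter_in_def by blast
qed

lemma bl_filter_image_alg_iff: "bl_filter (image_alg A \<tau>) G \<longleftrightarrow> filter_in A Img G"
  by (simp add: bl_filter_def filter_in_def bl_le_def image_alg_def)

lemma filter_in_Img_Int: assumes "tau_filter A \<tau> F" shows "filter_in A Img (F \<inter> Img)"
proof -
  have "\<one> \<in> F"
    using assms one_mem_filter_in[of M F] unfolding tau_filter_def bl_filter_def by simp
  with assms show ?thesis
    using one_Img Img_prod_closed Img_subset
    unfolding tau_filter_def bl_filter_def filter_in_def by blast
qed

lemma tau_filter_upset: assumes G: "filter_in A Img G" shows "tau_filter A \<tau> (upset G)"
  unfolding tau_filter_def
proof (intro conjI subsetI)
  show "bl_filter A (upset G)"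
    using G Img_subset unfolding filter_in_def by (intro bl_filter_upset) auto
  fix v assume "v \<in> \<tau> ` upset G"
  then obtain x g where "v = \<tau> x" "x \<in> M" "g \<in> G" "g \<preceq> x"
    unfolding upset_def by blast
  moreover from G \<open>g \<in> G\<close> have "g \<in> Img"
    unfolding filter_in_def by blast
  ultimately have "g \<preceq> v" "v \<in> M"
    using tau_mono[of g x] tau_Img[of g] by auto
  with \<open>g \<in> G\<close> show "v \<in> upset G"
    unfolding upset_def by blast
qed

lemma faithful_Int_Img_nontrivial:
  assumes faithful: "Ker = {\<one>}" and F: "tau_filter A \<tau> F" "F \<noteq> {\<one>}"
  shows "F \<inter> Img \<noteq> {\<one>}"
proof -
  obtain x where "x \<in> F" "x \<noteq> \<one>"
    using F filter_in_nontrivial[of M F] unfolding tau_filter_def bl_filter_def by auto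
  moreover from F \<open>x \<in> F\<close> have "x \<in> M" "\<tau> x \<in> F"
    unfolding tau_filter_def bl_filter_def filter_in_def by auto
  moreover have "x \<notin> Ker"
    using faithful \<open>x \<noteq> \<one>\<close> by blast
  ultimately have "\<tau> x \<in> F \<inter> Img" "\<tau> x \<noteq> \<one>"
    unfolding mem_Ker_iff by auto
  then show ?thesis
    by blast
qed

theorem subdir_irr_state_iff_subdir_irr_image:
  assumes faithful: "Ker = {\<one>}"
  shows "subdir_irr_state A \<tau> \<longleftrightarrow> subdir_irr_bl (image_alg A \<tau>)"
proof -
  have mono_Int: "mono (\<lambda>F. F \<inter> Img)"
    by (rule monoI) blast
  have upset_Int_Img: "upset G \<inter> Img \<subseteq> G" if "filter_in A Img G" for G
    using upset_Int[OF that Img_subset] by simp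
  have upset_restrict: "upset (F \<inter> Img) \<subseteq> F" if "tau_filter A \<tau> F" for F
    using that unfolding tau_filter_def by (simp add: upset_subset_filter)
  have "has_least_nontrivial (tau_filter A \<tau>) \<one> \<longleftrightarrow> has_least_nontrivial (filter_in A Img) \<one>"
  proof
    assume "has_least_nontrivial (tau_filter A \<tau>) \<one>"
    then show "has_least_nontrivial (filter_in A Img) \<one>"
      by (rule has_least_nontrivial_transfer[where r = "\<lambda>F. F \<inter> Img" and e = upset])
        (simp_all add: filter_in_Img_Int faithful_Int_Img_nontrivial[OF faithful] mono_Int tau_filter_upset
          upset_nontrivial[OF _ Img_subset] upset_Int_Img)
  next
    assume "has_least_nontrivial (filter_in A Img) \<one>"
    then show "has_least_nontrivial (tau_filter A \<tau>) \<one>"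
      by (rule has_least_nontrivial_transfer[where r = upset and e = "\<lambda>F. F \<inter> Img"])
        (simp_all add: filter_in_Img_Int faithful_Int_Img_nontrivial[OF faithful] mono_upset tau_filter_upset
          upset_nontrivial[OF _ Img_subset] upset_restrict)
  qed
  then show ?thesis
    unfolding subdir_irr_state_def subdir_irr_bl_def bl_filter_image_alg_iff
    by (simp add: image_alg_def)
qed

theorem Ker_trivial_or_subdir_irr_hoop:
  assumes "subdir_irr_state A \<tau>" shows "Ker = {\<one>} \<or> subdir_irr_hoop A Ker"
proof (cases "Ker = {\<one>}")
  case False
  obtain F where F: "tau_filter A \<tau> F" "F \<noteq> {\<one>}"
    and least: "\<And>G. tau_filter A \<tau> G \<Longrightarrow> G \<noteq> {\<one>} \<Longrightarrow> F \<subseteq> G"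
    using assms unfolding subdir_irr_state_def has_least_nontrivial_def by auto
  have "F \<subseteq> Ker"
    using least tau_filter_Ker False by blast
  with F least have "subdir_irr_hoop A Ker"
    unfolding subdir_irr_hoop_def has_least_nontrivial_def filter_in_Ker_iff by blast
  then show ?thesis ..
qed simp

theorem join_Ker_Img_eq_one:
  assumes "subdir_irr_state A \<tau>" and x: "x \<in> Ker" and y: "y \<in> Img" and "join x y = \<one>"
  shows "x = \<one> \<or> y = \<one>"
proof (rule ccontr)
  assume "\<not> (x = \<one> \<or> y = \<one>)"
  obtain F where F: "tau_filter A \<tau> F" "F \<noteq> {\<one>}"
    and least: "\<And>G. tau_filter A \<tau> G \<Longrightarrow> G \<noteq> {\<one>} \<Longrightarrow> F \<subseteq> G"
    using assms(1) unfolding subdir_irr_state_def has_least_nontrivial_def by auto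
  have xM: "x \<in> M" and yM: "y \<in> M"
    using x y by (auto simp: mem_Ker_iff)
  have "tau_filter A \<tau> (principal_filter x)"
    using xM pow_Ker[OF x] pow_mem_principal_filter[OF xM, of 0]
    by (intro tau_filter_principal_filter) (auto simp: mem_Ker_iff)
  moreover have "tau_filter A \<tau> (principal_filter y)"
    using yM tau_pow_fixed[OF yM tau_Img[OF y]] pow_mem_principal_filter[OF yM]
    by (intro tau_filter_principal_filter) auto
  ultimately have "F \<subseteq> principal_filter x" "F \<subseteq> principal_filter y"
    using least mem_principal_filter[OF xM] mem_principal_filter[OF yM] \<open>\<not> (x = \<one> \<or> y = \<one>)\<close>
    by blast+
  moreover obtain f where "f \<in> F" "f \<noteq> \<one>"
    using F filter_in_nontrivial[of M F] unfolding tau_filter_def bl_filter_def by auto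
  ultimately obtain n m where "f \<in> M" "pow x n \<preceq> f" "pow y m \<preceq> f"
    unfolding principal_filter_def upset_def by blast
  then have "join (pow x n) (pow y m) \<preceq> f"
    using xM yM by (simp add: join_least)
  then show False
    using \<open>f \<in> M\<close> \<open>f \<noteq> \<one>\<close> xM yM \<open>join x y = \<one>\<close> by (simp add: join_pow_eq_one one_le_iff)
qed

end

theorem lemma2p1:
  assumes "state_bl_algebra A \<tau>"
  shows "(state_kernel A \<tau> = {bl_one A} \<longrightarrow>
            (subdir_irr_state A \<tau> \<longleftrightarrow> subdir_irr_bl (image_alg A \<tau>)))
       \<and> (subdir_irr_state A \<tau> \<longrightarrow>
            (state_kernel A \<tau> = {bl_one A} \<or> subdir_irr_hoop A (state_kernel A \<tau>))
          \<and> (\<forall>x\<in>state_kernel A \<tau>. \<forall>y\<in>\<tau> ` bl_carrier A.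
               bl_join A x y = bl_one A \<longrightarrow> x = bl_one A \<or> y = bl_one A))"
proof -
  interpret state_BL A \<tau>
    using assms by unfold_locales (simp_all add: state_bl_algebra_def)
  show ?thesis
    using subdir_irr_state_iff_subdir_irr_image Ker_trivial_or_subdir_irr_hoop join_Ker_Img_eq_one
    by blast
qed

end
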